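(* Consider the algorithm described in the context, suppose it does not terminate finitely, and suppose there is $\sigma_{\min}>0$ with $\sigma_{\min}(J_k)\ge\sigma_{\min}$ for all $k\in\mathbb{N}$. If $\alpha_k\le\tau_{\min}/(\tau_{\min}L_g+L_J)$, then $k\in\mathcal S$. Therefore $$\alpha_k\ge\alpha_{\min}:=\min\{\alpha_0,\ \xi\tau_{\min}/(\tau_{\min}L_g+L_J)\}>0\quad\text{for all }k\in\mathbb{N},$$ and the number of unsuccessful iterations satisfies $$|\{k\in\mathbb{N}: k\notin\mathcal S\}|\le\max\Big(0,\Big\lceil\frac{\log\big(\tau_{\min}/(\alpha_0(\tau_{\min}L_g+L_J))\big)}{\log\xi}\Big\rceil\Big).$$
   Context: Problem: $\min_{x\in\mathbb{R}^n} f(x)+r(x)$ subject to $c(x)=0$, where $f:\mathbb{R}^n\to\mathbb{R}$ and $c:\mathbb{R}^n\to\mathbb{R}^m$ ($m\le n$) are continuously differentiable and $r:\mathbb{R}^n\to\mathbb{R}_{\ge 0}$ is convex. Write $g(x)=\nabla f(x)$, $J(x)=\nabla c(x)^T$, and $f_k=f(x_k)$, $g_k=g(x_k)$, $c_k=c(x_k)$, $J_k=J(x_k)$, $r_k=r(x_k)$. All norms are Euclidean (spectral norm for matrices). Merit function: $\Phi_\tau(x)=\tau(f(x)+r(x))+\|c(x)\|_2$. Algorithm: inputs $x_0$, $\alpha_0>0$, $\tau_{-1}>0$; constants $\kappa_v>0$, $\sigma_c,\epsilon_\tau,\xi,\eta\in(0,1)$, $\sigma_u\in(0,1/2]$, $\bar\sigma_u:=\sigma_u+\tfrac12$.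 For $k=0,1,\dots$: 1. If $J_k^Tc_k\ne0$, compute $v_k$ with $v_k\in\mathrm{Range}(J_k^T)$, $\|v_k\|_2\le\kappa_v\alpha_k\|J_k^Tc_k\|_2$, $\|c_k+J_kv_k\|_2\le\|c_k+J_kv_k^c\|_2$, where $v_k^c=-\beta_k^cJ_k^Tc_k$ with $\beta_k^c$ minimizing $\tfrac12\|c_k-\beta J_kJ_k^Tc_k\|_2^2$ over $0\le\beta\le\kappa_v\alpha_k$. Otherwise set $v_k=0$, and if $c_k\ne0$ terminate. 2. Let $u_k$ be the unique minimizer of $g_k^Tu+\tfrac1{2\alpha_k}\|u\|_2^2+r(x_k+v_k+u)$ subject to $J_ku=0$; set $s_k=v_k+u_k$. If $s_k=0$, terminate. 3. Let $D_k:=g_k^Ts_k+\bar\sigma_u\|s_k\|_2^2/\alpha_k+r(x_k+s_k)-r_k$; $\tau_{k,\mathrm{trial}}=\infty$ if $D_k\le0$, else $\tau_{k,\mathrm{trial}}=(1-\sigma_c)(\|c_k\|_2-\|c_k+J_kv_k\|_2)/D_k$. Set $\tau_k=\tau_{k-1}$ if $\tau_{k-1}\le\tau_{k,\mathrm{trial}}$, else $\tau_k=\min\{(1-\epsilon_\tau)\tau_{k-1},\tau_{k,\mathrm{trial}}\}$. 4. With $\Delta q_k(s,\tau):=-\tau(g_k^Ts+\tfrac1{2\alpha_k}\|s\|_2^2+r(x_k+s)-r_k)+\|c_k\|_2-\|c_k+J_ks\|_2$: if $\Phi_{\tau_k}(x_k+s_k)\le\Phi_{\tau_k}(x_k)-\eta\Delta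 q_k(s_k,\tau_k)$ set $x_{k+1}=x_k+s_k$, $\alpha_{k+1}=\alpha_k$ (iteration $k$ successful; $\mathcal S$ is the set of successful iterations); else $x_{k+1}=x_k$, $\alpha_{k+1}=\xi\alpha_k$. Standing assumption: there is an open convex set $\mathcal X$ containing all iterates $x_k$ and trial points $x_k+s_k$, and positive constants such that for all $x\in\mathcal X$: $f$ is bounded below, $\|\nabla f(x)\|_2\le\kappa_{\nabla f}$, $\|c(x)\|_2\le\kappa_c$, $\|J(x)\|_2\le\kappa_{\nabla c}$, every $w\in\partial r(x)$ has $\|w\|_2\le\kappa_{\partial r}$; $\nabla f$ is $L_g$-Lipschitz and $J$ is $L_J$-Lipschitz on $\mathcal X$. Constants: with $K:=2\kappa_v\kappa_{\nabla c}(\kappa_{\nabla f}+\kappa_{\partial r}+\bar\sigma_u\kappa_c\kappa_v\kappa_{\nabla c})$, $\tau_{\min,\mathrm{trial}}:=\min\{(1-\sigma_c)\kappa_v\sigma_{\min}^2/K,\ (1-\sigma_c)(\sigma_{\min}/\kappa_{\nabla c})^2/(K\alpha_0)\}$ and $\tau_{\min}:=\min\{\tau_0,(1-\epsilon_\tau)\tau_{\min,\mathrm{trial}}\}$. *)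

theory Defs
  imports "HOL-Analysis.Analysis"
begin

definition spec_norm :: "real^'n^'m \<Rightarrow> real" where
  "spec_norm A = onorm (\<lambda>h. A *v h)"

text \<open>Smallest singular value of an m x n matrix with m \<le> n
  (variational characterisation: min over unit y of norm of A^T y).\<close>
definition sigma_min_sv :: "real^'n^'m \<Rightarrow> real" where
  "sigma_min_sv A = Inf ((\<lambda>y. norm (transpose A *v y)) ` {y. norm y = 1})"

definition subdiff :: "(real^'n \<Rightarrow> real) \<Rightarrow> real^'n \<Rightarrow> (real^'n) set" where
  "subdiff r z = {w. \<forall>y. r z + w \<bullet> (y - z) \<le> r y}"

definition merit :: "(real^'n \<Rightarrow> real) \<Rightarrow> (real^'n \<Rightarrow> real) \<Rightarrow> (real^'n \<Rightarrow> real^'m)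
    \<Rightarrow> real \<Rightarrow> real^'n \<Rightarrow> real" where
  "merit f r c t z = t * (f z + r z) + norm (c z)"

definition delta_q :: "(real^'n \<Rightarrow> real^'n) \<Rightarrow> (real^'n \<Rightarrow> real^'m) \<Rightarrow> (real^'n \<Rightarrow> real^'n^'m)
    \<Rightarrow> (real^'n \<Rightarrow> real) \<Rightarrow> real \<Rightarrow> real^'n \<Rightarrow> real^'n \<Rightarrow> real \<Rightarrow> real" where
  "delta_q g c J r a xk s t =
     - t * (g xk \<bullet> s + (norm s)\<^sup>2 / (2 * a) + r (xk + s) - r xk)
     + norm (c xk) - norm (c xk + J xk *v s)"

definition u_obj :: "(real^'n \<Rightarrow> real^'n) \<Rightarrow> (real^'n \<Rightarrow> real) \<Rightarrow> real \<Rightarrow> real^'n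
    \<Rightarrow> real^'n \<Rightarrow> real^'n \<Rightarrow> real" where
  "u_obj g r a xk vk w = g xk \<bullet> w + (norm w)\<^sup>2 / (2 * a) + r (xk + vk + w)"

definition successful ::
  "(real^'n \<Rightarrow> real) \<Rightarrow> (real^'n \<Rightarrow> real^'n) \<Rightarrow> (real^'n \<Rightarrow> real^'m) \<Rightarrow> (real^'n \<Rightarrow> real^'n^'m)
   \<Rightarrow> (real^'n \<Rightarrow> real) \<Rightarrow> real \<Rightarrow> (nat \<Rightarrow> real^'n) \<Rightarrow> (nat \<Rightarrow> real) \<Rightarrow> (nat \<Rightarrow> real)
   \<Rightarrow> (nat \<Rightarrow> real^'n) \<Rightarrow> (nat \<Rightarrow> real^'n) \<Rightarrow> nat \<Rightarrow> bool" where
  "successful f g c J r eta x alpha tau v u k \<longleftrightarrow>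
     merit f r c (tau k) (x k + (v k + u k))
       \<le> merit f r c (tau k) (x k) - eta * delta_q g c J r (alpha k) (x k) (v k + u k) (tau k)"

text \<open>The sequences x, alpha, tau, v, u (and the Cauchy step sizes beta)
  are generated by the algorithm (Steps 1-4) with the given data and constants.
  Termination tests are not part of this predicate.\<close>
definition alg_iterates ::
  "(real^'n \<Rightarrow> real) \<Rightarrow> (real^'n \<Rightarrow> real^'n) \<Rightarrow> (real^'n \<Rightarrow> real^'m) \<Rightarrow> (real^'n \<Rightarrow> real^'n^'m)
   \<Rightarrow> (real^'n \<Rightarrow> real) \<Rightarrow> real \<Rightarrow> real \<Rightarrow> real \<Rightarrow> real \<Rightarrow> real \<Rightarrow> real
   \<Rightarrow> real \<Rightarrow> real
   \<Rightarrow> (nat \<Rightarrow> real^'n) \<Rightarrow> (nat \<Rightarrow> real) \<Rightarrow> (nat \<Rightarrow> real)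
   \<Rightarrow> (nat \<Rightarrow> real^'n) \<Rightarrow> (nat \<Rightarrow> real^'n) \<Rightarrow> (nat \<Rightarrow> real) \<Rightarrow> bool" where
  "alg_iterates f g c J r kappa_v sigma_c eps_tau xi eta sigma_u alpha0 tau_m1
      x alpha tau v u beta \<longleftrightarrow>
   alpha 0 = alpha0 \<and>
   (\<forall>k. let xk = x k; ck = c xk; Jk = J xk; ak = alpha k; sk = v k + u k;
            Jtc = transpose Jk *v ck;
            Dk = g xk \<bullet> sk + (sigma_u + 1/2) * (norm sk)\<^sup>2 / ak + r (xk + sk) - r xk;
            tprev = (if k = 0 then tau_m1 else tau (k - 1))
        in
      \<comment> \<open>Step 1\<close>
      (Jtc \<noteq> 0 \<longrightarrow>
         v k \<in> range (\<lambda>y. transpose Jk *v y) \<and>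
         norm (v k) \<le> kappa_v * ak * norm Jtc \<and>
         0 \<le> beta k \<and> beta k \<le> kappa_v * ak \<and>
         (\<forall>b. 0 \<le> b \<and> b \<le> kappa_v * ak \<longrightarrow>
            (norm (ck - beta k *\<^sub>R (Jk *v Jtc)))\<^sup>2 / 2 \<le> (norm (ck - b *\<^sub>R (Jk *v Jtc)))\<^sup>2 / 2) \<and>
         norm (ck + Jk *v v k) \<le> norm (ck + Jk *v ((- beta k) *\<^sub>R Jtc))) \<and>
      (Jtc = 0 \<longrightarrow> v k = 0) \<and>
      \<comment> \<open>Step 2: u k is the unique minimiser of the subproblem on the null space of Jk\<close>
      Jk *v u k = 0 \<and>
      (\<forall>w. Jk *v w = 0 \<longrightarrow> u_obj g r ak xk (v k) (u k) \<le> u_obj g r ak xk (v k) w) \<and>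
      (\<forall>w. Jk *v w = 0 \<and> u_obj g r ak xk (v k) w \<le> u_obj g r ak xk (v k) (u k) \<longrightarrow> w = u k) \<and>
      \<comment> \<open>Step 3: merit parameter update (tau_trial = infinity when Dk \<le> 0)\<close>
      (Dk \<le> 0 \<longrightarrow> tau k = tprev) \<and>
      (0 < Dk \<longrightarrow>
         (let tt = (1 - sigma_c) * (norm ck - norm (ck + Jk *v v k)) / Dk in
          tau k = (if tprev \<le> tt then tprev else min ((1 - eps_tau) * tprev) tt))) \<and>
      \<comment> \<open>Step 4\<close>
      (successful f g c J r eta x alpha tau v u k \<longrightarrow> x (Suc k) = xk + sk \<and> alpha (Suc k) = ak) \<and>
      (\<not> successful f g c J r eta x alpha tau v u k \<longrightarrow> x (Suc k) = xk \<and> alpha (Suc k) = xi * ak))"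

end

theory Submission
  imports Defs
begin

text \<open>
  The merit parameter stays above \<open>tau_min\<close>.  The normal step achieves a Cauchy decrease of
  order \<open>smin\<^sup>2 min (kappa_v alpha_k) (1 / k_J\<^sup>2) norm c_k\<close> in the linearized constraint
  violation, while optimality of the tangential step along the ray through \<open>u_k\<close> bounds \<open>D_k\<close>
  by \<open>(k_f + k_r) norm v_k + (sigma_u + 1/2) (norm v_k)\<^sup>2 / alpha_k = O(alpha_k norm c_k)\<close>;
  hence every trial value is at least \<open>tau_min_trial\<close>.  Given \<open>tau_k \<ge> tau_min\<close>, the Lipschitz
  bounds on \<open>g\<close> and \<open>J\<close> show that the merit function decreases by at least the model reduction
  \<open>delta_q\<close> once \<open>alpha_k (tau_k L_g + L_J) \<le> tau_k\<close>, and the update of \<open>tau_k\<close> makes \<open>delta_q\<close>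
  nonnegative, so such steps are accepted.  Since \<open>alpha\<close> is multiplied by \<open>xi\<close> exactly on
  unsuccessful iterations, it never falls below \<open>xi\<close> times that threshold, and the number of
  unsuccessful iterations is at most the number of reductions that take \<open>alpha_0\<close> below it.
\<close>


lemma le_add_small_mult_imp_le:
  fixes A B C \<delta> :: real
  assumes "0 < \<delta>" "\<And>e. 0 < e \<Longrightarrow> e < \<delta> \<Longrightarrow> A \<le> B + e * C"
  shows "A \<le> B"
proof -
  have "((\<lambda>e. B + e * C) \<longlongrightarrow> B) (at_right 0)"
    by (auto intro!: tendsto_eq_intros)
  moreover have "\<forall>\<^sub>F e in at_right 0. A \<le> B + e * C"
    unfolding eventually_at_right_field using assms by auto
  ultimately show ?thesis
    using tendsto_le[OF trivial_limit_at_right_real _ tendsto_const] by blast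
qed

lemma convex_mem_add_scaleR:
  assumes "convex X" "x \<in> X" "x + s \<in> X" "0 \<le> t" "t \<le> 1"
  shows "x + t *\<^sub>R s \<in> X"
proof -
  have "(1 - t) *\<^sub>R x + t *\<^sub>R (x + s) \<in> X"
    using assms unfolding convex_alt by blast
  then show ?thesis
    by (simp add: algebra_simps)
qed

subsection \<open>Subgradients of convex functions\<close>

lemma convex_strict_epigraph:
  assumes "convex_on UNIV r"
  shows "convex {p :: 'a::real_vector \<times> real. r (fst p) < snd p}"
proof (rule convexI)
  fix p q :: "'a \<times> real" and s t :: real
  assume "p \<in> {p. r (fst p) < snd p}" "q \<in> {p. r (fst p) < snd p}"
    and st: "0 \<le> s" "0 \<le> t" "s + t = 1"
  then have p: "r (fst p) < snd p" and q: "r (fst q) < snd q"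
    by auto
  have "r (s *\<^sub>R fst p + t *\<^sub>R fst q) \<le> s * r (fst p) + t * r (fst q)"
    using assms st unfolding convex_on_def by blast
  also have "\<dots> < s * snd p + t * snd q"
  proof (cases "s = 0")
    case True
    then show ?thesis
      using st q by simp
  next
    case False
    then have "s * r (fst p) < s * snd p"
      using st p by simp
    moreover have "t * r (fst q) \<le> t * snd q"
      using st q by (simp add: mult_left_mono)
    ultimately show ?thesis
      by linarith
  qed
  finally show "s *\<^sub>R p + t *\<^sub>R q \<in> {p. r (fst p) < snd p}"
    by simp
qed

lemma convex_on_subdiff_nonempty:
  fixes r :: "real^'n \<Rightarrow> real"
  assumes "convex_on UNIV r"
  obtains w where "w \<in> subdiff r z"
proof -
  define E where "E = {p :: (real^'n) \<times> real. r (fst p) < snd p}"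
  have "(z, r z + 1) \<in> E" "E \<inter> {(z, r z)} = {}"
    unfolding E_def by auto
  then have "E \<noteq> {}" "E \<inter> {(z, r z)} = {}"
    by blast+
  then obtain a b where "a \<noteq> 0" and below: "\<forall>p\<in>E. a \<bullet> p \<le> b" and above: "\<forall>p\<in>{(z, r z)}. b \<le> a \<bullet> p"
    using separating_hyperplane_sets[OF convex_strict_epigraph[OF assms, folded E_def] convex_singleton]
    by blast
  obtain a1 a0 where a: "a = (a1, a0)"
    by (cases a)
  have separation: "a1 \<bullet> y + a0 * t \<le> a1 \<bullet> z + a0 * r z" if "r y < t" for y t
  proof -
    have "a \<bullet> (y, t) \<le> b"
      using below that unfolding E_def by simp
    moreover have "b \<le> a \<bullet> (z, r z)"
      using above by simp
    ultimately show ?thesis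
      unfolding a by simp
  qed
  have "a0 < 0"
  proof (rule ccontr)
    assume "\<not> a0 < 0"
    show False
    proof (cases "a0 = 0")
      case True
      then have "a1 \<noteq> 0"
        using \<open>a \<noteq> 0\<close> a by (simp add: zero_prod_def)
      have "a1 \<bullet> (z + a1) \<le> a1 \<bullet> z"
        using separation[of "z + a1" "r (z + a1) + 1"] True by simp
      then have "a1 \<bullet> a1 \<le> 0"
        by (simp add: inner_add_right)
      then show False
        using \<open>a1 \<noteq> 0\<close> inner_gt_zero_iff[of a1] by linarith
    next
      case False
      then show False
        using separation[of z "r z + 1"] \<open>\<not> a0 < 0\<close> by (simp add: algebra_simps)
    qed
  qed
  define w where "w = (-1 / a0) *\<^sub>R a1"
  have "r z + w \<bullet> (y - z) \<le> r y" for y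
  proof (rule field_le_epsilon)
    fix e :: real
    assume "0 < e"
    then have "a1 \<bullet> (y - z) \<le> (- a0) * (r y + e - r z)"
      using separation[of y "r y + e"] by (simp add: algebra_simps)
    moreover have "w \<bullet> (y - z) = a1 \<bullet> (y - z) / (- a0)"
      unfolding w_def by (simp add: divide_simps)
    moreover have "a1 \<bullet> (y - z) / (- a0) \<le> r y + e - r z"
      using \<open>a0 < 0\<close> calculation(1) by (subst pos_divide_le_eq) (auto simp: mult.commute)
    ultimately have "w \<bullet> (y - z) \<le> r y + e - r z"
      by simp
    then show "r z + w \<bullet> (y - z) \<le> r y + e"
      by linarith
  qed
  then show thesis
    using that unfolding subdiff_def by blast
qed

lemma subdiff_norm_le_imp_diff_le:
  assumes "w \<in> subdiff r y" "norm w \<le> k"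
  shows "r y - r (y - d) \<le> k * norm d"
proof -
  have "r y + w \<bullet> ((y - d) - y) \<le> r (y - d)"
    using assms(1) unfolding subdiff_def by blast
  then have "r y - r (y - d) \<le> w \<bullet> d"
    by simp
  also have "\<dots> \<le> norm w * norm d"
    by (rule norm_cauchy_schwarz)
  also have "\<dots> \<le> k * norm d"
    using assms(2) by (simp add: mult_right_mono)
  finally show ?thesis .
qed

lemma tangential_step_bound:
  fixes g :: "real^'n \<Rightarrow> real^'n" and r :: "real^'n \<Rightarrow> real" and x v u :: "real^'n"
  assumes r_convex: "convex_on UNIV r"
    and X: "open X" "x + (v + u) \<in> X"
    and subdiff_bound: "\<And>y w. y \<in> X \<Longrightarrow> w \<in> subdiff r y \<Longrightarrow> norm w \<le> k_r"
    and u_opt: "\<And>e. 0 < e \<Longrightarrow> e < 1 \<Longrightarrow> u_obj g r a x v u \<le> u_obj g r a x v ((1 - e) *\<^sub>R u)"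
    and orth: "v \<bullet> u = 0" and a: "0 < a" and "\<sigma> \<le> 1" and "norm (g x) \<le> k_f"
  shows "g x \<bullet> (v + u) + \<sigma> * (norm (v + u))\<^sup>2 / a + r (x + (v + u)) - r x
           \<le> (k_f + k_r) * norm v + \<sigma> * (norm v)\<^sup>2 / a"
proof -
  define z where "z = x + (v + u)"
  define q where "q = (norm u)\<^sup>2 / (2 * a)"
  obtain d where d: "0 < d" "ball z d \<subseteq> X"
    using X open_contains_ball z_def by blast
  \<comment> \<open>Optimality of \<open>u\<close> against the shortened step \<open>(1 - e) u\<close>, convexity of \<open>r\<close> between \<open>x\<close>
      and \<open>z\<close>, and a bounded subgradient at \<open>z - e u\<close> (which absorbs the shift by \<open>e v\<close>);
      \<open>e \<rightarrow> 0\<close> gives \<open>tangential\<close>.\<close>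
  have ray: "g x \<bullet> u + 2 * q + r z - r x \<le> k_r * norm v + e * q"
    if e: "0 < e" "e < 1" "e * norm u < d" for e
  proof -
    define y where "y = z - e *\<^sub>R u"
    have "y \<in> X"
      using d e by (auto simp: y_def dist_norm)
    obtain w where "w \<in> subdiff r y"
      using convex_on_subdiff_nonempty[OF r_convex] by blast
    then have lip: "r y - r (y - e *\<^sub>R v) \<le> k_r * (e * norm v)"
      using subdiff_norm_le_imp_diff_le[OF _ subdiff_bound[OF \<open>y \<in> X\<close>], where d = "e *\<^sub>R v"] e by simp
    have "y - e *\<^sub>R v = (1 - e) *\<^sub>R z + e *\<^sub>R x"
      by (simp add: y_def z_def algebra_simps)
    then have conv: "r (y - e *\<^sub>R v) \<le> (1 - e) * r z + e * r x"
      using convex_onD[OF r_convex, of e z x] e by simp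
    have "(norm ((1 - e) *\<^sub>R u))\<^sup>2 = (1 - e)\<^sup>2 * (norm u)\<^sup>2"
      using e by (simp add: power_mult_distrib)
    moreover have "x + v + (1 - e) *\<^sub>R u = y"
      by (simp add: y_def z_def algebra_simps)
    ultimately have opt: "g x \<bullet> u + q + r z \<le> (1 - e) * (g x \<bullet> u) + (1 - e)\<^sup>2 * q + r y"
      using u_opt[OF e(1,2)] unfolding u_obj_def q_def z_def by (simp add: add.assoc)
    have "(1 - e)\<^sup>2 * q = q - 2 * (e * q) + e * (e * q)" "(1 - e) * (g x \<bullet> u) = g x \<bullet> u - e * (g x \<bullet> u)"
      by (simp_all add: power2_eq_square algebra_simps)
    with opt lip conv have "e * (g x \<bullet> u + 2 * q + r z - r x) \<le> e * (k_r * norm v + e * q)"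
      by (simp add: algebra_simps)
    then show ?thesis
      using e by simp
  qed
  have tangential: "g x \<bullet> u + 2 * q + r z - r x \<le> k_r * norm v"
  proof (rule le_add_small_mult_imp_le)
    show "0 < min 1 (d / (norm u + 1))"
      using d by (simp add: add_nonneg_pos)
    fix e :: real
    assume e: "0 < e" "e < min 1 (d / (norm u + 1))"
    then have "e * (norm u + 1) < d"
      by (simp add: less_divide_eq add_nonneg_pos)
    moreover have "e * norm u \<le> e * (norm u + 1)"
      using e by simp
    ultimately have "e * norm u < d"
      by linarith
    then show "g x \<bullet> u + 2 * q + r z - r x \<le> k_r * norm v + e * q"
      using e by (intro ray) auto
  qed
  have "(norm (v + u))\<^sup>2 = (norm v)\<^sup>2 + (norm u)\<^sup>2"
    using orth by (simp add: norm_add_Pythagorean orthogonal_def)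
  moreover have "g x \<bullet> v \<le> k_f * norm v"
    using norm_cauchy_schwarz[of "g x" v] \<open>norm (g x) \<le> k_f\<close> by (meson mult_right_mono norm_ge_zero order_trans)
  moreover have "\<sigma> * (norm u)\<^sup>2 / a \<le> 2 * q"
    using mult_right_mono[OF \<open>\<sigma> \<le> 1\<close>, of "(norm u)\<^sup>2"] a unfolding q_def by (simp add: divide_right_mono)
  ultimately show ?thesis
    using tangential unfolding z_def by (simp add: inner_add_right add_divide_distrib distrib_left distrib_right)
qed

subsection \<open>Matrix norms and the normal step\<close>

lemma norm_matrix_vector_le:
  fixes A :: "real^'n^'m"
  assumes "spec_norm A \<le> k"
  shows "norm (A *v h) \<le> k * norm h"
proof -
  have "norm (A *v h) \<le> spec_norm A * norm h"
    unfolding spec_norm_def using onorm[OF matrix_vector_mul_bounded_linear] by blast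
  then show ?thesis
    using mult_right_mono[OF assms norm_ge_zero[of h]] by linarith
qed

lemma norm_transpose_vector_le:
  fixes A :: "real^'n^'m"
  assumes "spec_norm A \<le> k"
  shows "norm (transpose A *v y) \<le> k * norm y"
proof (cases "transpose A *v y = 0")
  case True
  have "0 \<le> k"
    using assms onorm_pos_le[OF matrix_vector_mul_bounded_linear, of A] unfolding spec_norm_def by linarith
  with True show ?thesis
    by simp
next
  case False
  define a where "a = transpose A *v y"
  have "(norm a)\<^sup>2 = y \<bullet> (A *v a)"
    unfolding a_def power2_norm_eq_inner by (simp add: dot_lmul_matrix)
  also have "\<dots> \<le> norm y * (k * norm a)"
    using norm_cauchy_schwarz[of y "A *v a"] norm_matrix_vector_le[OF assms, of a]
    by (meson mult_left_mono norm_ge_zero order_trans)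
  finally show ?thesis
    using False unfolding a_def[symmetric] by (simp add: power2_eq_square algebra_simps)
qed

lemma sigma_min_sv_le:
  fixes A :: "real^'n^'m"
  assumes "s \<le> sigma_min_sv A"
  shows "s * norm y \<le> norm (transpose A *v y)"
proof (cases "y = 0")
  case False
  have "sigma_min_sv A \<le> norm (transpose A *v sgn y)"
    unfolding sigma_min_sv_def
    by (rule cInf_lower) (use False in \<open>auto simp: norm_sgn intro: bdd_belowI[where m=0]\<close>)
  also have "\<dots> = norm (transpose A *v y) / norm y"
    by (simp add: sgn_div_norm matrix_vector_mult_scaleR divide_inverse_commute)
  finally have "sigma_min_sv A * norm y \<le> norm (transpose A *v y)"
    using False by (simp add: field_simps)
  then show ?thesis
    using assms by (meson mult_right_mono norm_ge_zero order_trans)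
qed simp

lemma norm_diff_scaleR_sq:
  fixes c w :: "'a::real_inner"
  shows "(norm (c - b *\<^sub>R w))\<^sup>2 = (norm c)\<^sup>2 - 2 * b * (c \<bullet> w) + b\<^sup>2 * (norm w)\<^sup>2"
  unfolding power2_norm_eq_inner
  by (simp add: inner_diff_left inner_diff_right inner_commute power2_eq_square)

lemma steepest_descent_sq_norm_le:
  fixes c :: "real^'m" and A :: "real^'n^'m"
  assumes "spec_norm A \<le> k" "0 \<le> b" "b * k\<^sup>2 \<le> 1"
  shows "(norm (c - b *\<^sub>R (A *v (transpose A *v c))))\<^sup>2 \<le> (norm c)\<^sup>2 - b * (norm (transpose A *v c))\<^sup>2"
proof -
  define a where "a = transpose A *v c"
  have ca: "c \<bullet> (A *v a) = (norm a)\<^sup>2"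
    unfolding a_def power2_norm_eq_inner by (simp add: dot_lmul_matrix)
  have "(norm (A *v a))\<^sup>2 \<le> (k * norm a)\<^sup>2"
    by (rule power_mono[OF norm_matrix_vector_le[OF assms(1)]]) simp
  then have "b\<^sup>2 * (norm (A *v a))\<^sup>2 \<le> b\<^sup>2 * (k\<^sup>2 * (norm a)\<^sup>2)"
    by (intro mult_left_mono) (simp_all add: power_mult_distrib)
  also have "\<dots> = (b * k\<^sup>2) * (b * (norm a)\<^sup>2)"
    by (simp add: power2_eq_square mult_ac)
  also have "\<dots> \<le> 1 * (b * (norm a)\<^sup>2)"
    using assms(2,3) by (intro mult_right_mono) auto
  finally have "b\<^sup>2 * (norm (A *v a))\<^sup>2 \<le> b * (norm a)\<^sup>2"
    by simp
  then show ?thesis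
    unfolding a_def[symmetric] norm_diff_scaleR_sq ca by linarith
qed

lemma cauchy_step_decrease:
  fixes c :: "real^'m" and A :: "real^'n^'m" and v :: "real^'n"
  assumes A: "spec_norm A \<le> k" "0 < k" and "0 \<le> b_max"
    and cauchy: "\<And>b. 0 \<le> b \<Longrightarrow> b \<le> b_max \<Longrightarrow>
        norm (c - \<beta> *\<^sub>R (A *v (transpose A *v c))) \<le> norm (c - b *\<^sub>R (A *v (transpose A *v c)))"
    and v: "norm (c + A *v v) \<le> norm (c - \<beta> *\<^sub>R (A *v (transpose A *v c)))"
  shows "norm (c + A *v v) \<le> norm c"
    and "min b_max (1 / k\<^sup>2) * (norm (transpose A *v c))\<^sup>2 / (2 * norm c) \<le> norm c - norm (c + A *v v)"
proof -
  show N_le: "norm (c + A *v v) \<le> norm c"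
    using v cauchy[of 0] \<open>0 \<le> b_max\<close> by simp
  define b where "b = min b_max (1 / k\<^sup>2)"
  define N where "N = norm (c + A *v v)"
  have b: "0 \<le> b" "b \<le> b_max" "b \<le> 1 / k\<^sup>2"
    using \<open>0 \<le> b_max\<close> by (auto simp: b_def)
  then have "b * k\<^sup>2 \<le> 1"
    using \<open>0 < k\<close> by (simp add: le_divide_eq)
  have "N \<le> norm (c - b *\<^sub>R (A *v (transpose A *v c)))"
    unfolding N_def using v cauchy[OF b(1,2)] by linarith
  then have "N\<^sup>2 \<le> (norm (c - b *\<^sub>R (A *v (transpose A *v c))))\<^sup>2"
    by (rule power_mono) (simp add: N_def)
  also have "\<dots> \<le> (norm c)\<^sup>2 - b * (norm (transpose A *v c))\<^sup>2"
    using steepest_descent_sq_norm_le[OF A(1) b(1) \<open>b * k\<^sup>2 \<le> 1\<close>] .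
  finally have "b * (norm (transpose A *v c))\<^sup>2 \<le> (norm c - N) * (norm c + N)"
    by (simp add: power2_eq_square algebra_simps)
  also have "\<dots> \<le> (norm c - N) * (2 * norm c)"
    using N_le unfolding N_def by (intro mult_left_mono) auto
  finally have decrease: "b * (norm (transpose A *v c))\<^sup>2 \<le> (norm c - N) * (2 * norm c)" .
  show "min b_max (1 / k\<^sup>2) * (norm (transpose A *v c))\<^sup>2 / (2 * norm c) \<le> norm c - norm (c + A *v v)"
  proof (cases "c = 0")
    case True
    then show ?thesis
      using N_le by simp
  next
    case False
    then show ?thesis
      using decrease unfolding b_def N_def by (simp add: pos_divide_le_eq)
  qed
qed

subsection \<open>Linearization error under Lipschitz derivatives\<close>

lemma increment_le_of_deriv_le_linear:
  fixes h h' :: "real \<Rightarrow> real"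
  assumes "\<And>t. 0 \<le> t \<Longrightarrow> t \<le> 1 \<Longrightarrow> (h has_real_derivative h' t) (at t)"
    and "\<And>t. 0 \<le> t \<Longrightarrow> t \<le> 1 \<Longrightarrow> h' t \<le> K * t"
  shows "h 1 - h 0 \<le> K / 2"
proof -
  define p where "p t = h t - K * t\<^sup>2 / 2" for t
  have "p 1 \<le> p 0"
  proof (rule DERIV_nonpos_imp_nonincreasing[of 0 1 p])
    fix t :: real
    assume t: "0 \<le> t" "t \<le> 1"
    have "(p has_real_derivative (h' t - K * t)) (at t)"
      unfolding p_def using assms(1)[OF t] by (auto intro!: derivative_eq_intros)
    then show "\<exists>y. (p has_real_derivative y) (at t) \<and> y \<le> 0"
      using assms(2)[OF t] by auto
  qed simp
  then show ?thesis
    unfolding p_def by simp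
qed

lemma has_real_derivative_along_line:
  fixes G :: "'a::real_normed_vector \<Rightarrow> real"
  assumes "(G has_derivative G') (at (x + t *\<^sub>R s))"
  shows "((\<lambda>t. G (x + t *\<^sub>R s)) has_real_derivative G' s) (at t)"
proof -
  have "((\<lambda>t. x + t *\<^sub>R s) has_derivative (\<lambda>d. d *\<^sub>R s)) (at t)"
    by (auto intro!: derivative_eq_intros)
  from has_derivative_compose[OF this assms]
  have "((\<lambda>t. G (x + t *\<^sub>R s)) has_derivative (\<lambda>d. G' (d *\<^sub>R s))) (at t)" .
  then show ?thesis
    using linear_scale[OF has_derivative_linear[OF assms]]
    by (auto intro: has_derivative_imp_has_field_derivative)
qed

lemma inner_sgn_self: "sgn x \<bullet> x = norm (x :: 'a::real_inner)"
  by (cases "x = 0") (simp_all add: sgn_div_norm dot_square_norm power2_eq_square)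


lemma linearization_error_le:
  fixes F :: "'a::real_normed_vector \<Rightarrow> 'b::real_inner"
  assumes deriv: "\<And>t. 0 \<le> t \<Longrightarrow> t \<le> 1 \<Longrightarrow> (F has_derivative F' (x + t *\<^sub>R s)) (at (x + t *\<^sub>R s))"
    and lip: "\<And>t. 0 \<le> t \<Longrightarrow> t \<le> 1 \<Longrightarrow> norm (F' (x + t *\<^sub>R s) s - F' x s) \<le> L * t * (norm s)\<^sup>2"
  shows "norm (F (x + s) - F x - F' x s) \<le> L / 2 * (norm s)\<^sup>2"
proof -
  define e where "e = sgn (F (x + s) - F x - F' x s)"
  define h where "h t = e \<bullet> F (x + t *\<^sub>R s) - t * (e \<bullet> F' x s)" for t
  have "h 1 - h 0 \<le> L * (norm s)\<^sup>2 / 2"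
  proof (rule increment_le_of_deriv_le_linear)
    fix t :: real
    assume t: "0 \<le> t" "t \<le> 1"
    have "((\<lambda>y. e \<bullet> F y) has_derivative (\<lambda>d. e \<bullet> F' (x + t *\<^sub>R s) d)) (at (x + t *\<^sub>R s))"
      using deriv[OF t] by (auto intro!: derivative_eq_intros)
    from has_real_derivative_along_line[OF this]
    show "(h has_real_derivative (e \<bullet> F' (x + t *\<^sub>R s) s - e \<bullet> F' x s)) (at t)"
      unfolding h_def by (auto intro!: derivative_eq_intros)
    have "e \<bullet> F' (x + t *\<^sub>R s) s - e \<bullet> F' x s \<le> norm e * norm (F' (x + t *\<^sub>R s) s - F' x s)"
      using norm_cauchy_schwarz[of e "F' (x + t *\<^sub>R s) s - F' x s"] by (simp add: inner_diff_right)
    also have "\<dots> \<le> norm (F' (x + t *\<^sub>R s) s - F' x s)"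
      by (rule mult_left_le_one_le) (auto simp: e_def norm_sgn)
    also have "\<dots> \<le> L * t * (norm s)\<^sup>2"
      by (rule lip[OF t])
    finally show "e \<bullet> F' (x + t *\<^sub>R s) s - e \<bullet> F' x s \<le> L * (norm s)\<^sup>2 * t"
      by (simp add: mult_ac)
  qed
  moreover have "h 1 - h 0 = e \<bullet> (F (x + s) - F x - F' x s)"
    unfolding h_def by (simp add: inner_diff_right)
  moreover have "\<dots> = norm (F (x + s) - F x - F' x s)"
    unfolding e_def by (rule inner_sgn_self)
  ultimately show ?thesis
    by simp
qed

lemma lipschitz_gradient_upper_bound:
  fixes f :: "'a::real_inner \<Rightarrow> real"
  assumes deriv: "\<And>z. (f has_derivative (\<lambda>h. g z \<bullet> h)) (at z)"
    and X: "convex X" "x \<in> X" "x + s \<in> X"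
    and lip: "\<And>y z. y \<in> X \<Longrightarrow> z \<in> X \<Longrightarrow> norm (g y - g z) \<le> L * dist y z"
  shows "f (x + s) \<le> f x + g x \<bullet> s + L / 2 * (norm s)\<^sup>2"
proof -
  have "norm (f (x + s) - f x - g x \<bullet> s) \<le> L / 2 * (norm s)\<^sup>2"
  proof (rule linearization_error_le[where F' = "\<lambda>z h. g z \<bullet> h"])
    fix t :: real
    assume t: "0 \<le> t" "t \<le> 1"
    show "(f has_derivative (\<lambda>h. g (x + t *\<^sub>R s) \<bullet> h)) (at (x + t *\<^sub>R s))"
      by (rule deriv)
    have "x + t *\<^sub>R s \<in> X"
      by (rule convex_mem_add_scaleR[OF X t])
    then have "norm (g (x + t *\<^sub>R s) - g x) \<le> L * (t * norm s)"
      using lip[OF \<open>x + t *\<^sub>R s \<in> X\<close> X(2)] t by (simp add: dist_norm)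
    then have "norm (g (x + t *\<^sub>R s) - g x) * norm s \<le> L * (t * norm s) * norm s"
      by (rule mult_right_mono) simp
    moreover have "norm (g (x + t *\<^sub>R s) \<bullet> s - g x \<bullet> s) \<le> norm (g (x + t *\<^sub>R s) - g x) * norm s"
      using Cauchy_Schwarz_ineq2[of "g (x + t *\<^sub>R s) - g x" s] by (simp add: inner_diff_left)
    ultimately show "norm (g (x + t *\<^sub>R s) \<bullet> s - g x \<bullet> s) \<le> L * t * (norm s)\<^sup>2"
      by (simp add: power2_eq_square mult_ac)
  qed
  then show ?thesis
    using abs_ge_self[of "f (x + s) - f x - g x \<bullet> s"] by simp
qed

lemma lipschitz_jacobian_linearization_bound:
  fixes c :: "real^'n \<Rightarrow> real^'m" and J :: "real^'n \<Rightarrow> real^'n^'m"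
  assumes deriv: "\<And>z. (c has_derivative (\<lambda>h. J z *v h)) (at z)"
    and X: "convex X" "x \<in> X" "x + s \<in> X"
    and lip: "\<And>y z. y \<in> X \<Longrightarrow> z \<in> X \<Longrightarrow> spec_norm (J y - J z) \<le> L * dist y z"
  shows "norm (c (x + s)) \<le> norm (c x + J x *v s) + L / 2 * (norm s)\<^sup>2"
proof -
  have "norm (c (x + s) - c x - J x *v s) \<le> L / 2 * (norm s)\<^sup>2"
  proof (rule linearization_error_le[where F' = "\<lambda>z h. J z *v h"])
    fix t :: real
    assume t: "0 \<le> t" "t \<le> 1"
    show "(c has_derivative (\<lambda>h. J (x + t *\<^sub>R s) *v h)) (at (x + t *\<^sub>R s))"
      by (rule deriv)
    have "x + t *\<^sub>R s \<in> X"
      by (rule convex_mem_add_scaleR[OF X t])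
    then have "spec_norm (J (x + t *\<^sub>R s) - J x) \<le> L * (t * norm s)"
      using lip[OF \<open>x + t *\<^sub>R s \<in> X\<close> X(2)] t by (simp add: dist_norm)
    then have "norm ((J (x + t *\<^sub>R s) - J x) *v s) \<le> L * (t * norm s) * norm s"
      by (rule norm_matrix_vector_le)
    then show "norm (J (x + t *\<^sub>R s) *v s - J x *v s) \<le> L * t * (norm s)\<^sup>2"
      by (simp add: matrix_vector_mult_diff_rdistrib power2_eq_square mult_ac)
  qed
  moreover have "norm (c (x + s)) \<le> norm (c x + J x *v s) + norm (c (x + s) - c x - J x *v s)"
    using norm_triangle_ineq[of "c x + J x *v s" "c (x + s) - c x - J x *v s"] by simp
  ultimately show ?thesis
    by linarith
qed

subsection \<open>Merit function and merit parameter\<close>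

lemma merit_le_sub_delta_q:
  fixes f r :: "real^'n \<Rightarrow> real" and c :: "real^'n \<Rightarrow> real^'m"
  assumes f_le: "f (x + s) \<le> f x + g x \<bullet> s + L_g / 2 * (norm s)\<^sup>2"
    and c_le: "norm (c (x + s)) \<le> norm (c x + J x *v s) + L_J / 2 * (norm s)\<^sup>2"
    and step: "a * (t * L_g + L_J) \<le> t" and "0 \<le> t" "0 < a"
  shows "merit f r c t (x + s) \<le> merit f r c t x - delta_q g c J r a x s t"
proof -
  define n2 where "n2 = (norm s)\<^sup>2"
  have "(t * L_g + L_J) * n2 \<le> t / a * n2"
    using step \<open>0 < a\<close> unfolding n2_def by (intro mult_right_mono) (simp_all add: le_divide_eq mult.commute)
  then have curvature: "t * (L_g / 2 * n2) + L_J / 2 * n2 \<le> t * (n2 / (2 * a))"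
    by (simp add: algebra_simps)
  have "t * f (x + s) \<le> t * (f x + g x \<bullet> s + L_g / 2 * n2)"
    using f_le \<open>0 \<le> t\<close> unfolding n2_def by (rule mult_left_mono)
  moreover have "merit f r c t (x + s) = t * f (x + s) + t * r (x + s) + norm (c (x + s))"
    "merit f r c t x = t * f x + t * r x + norm (c x)"
    by (simp_all add: merit_def distrib_left)
  moreover have "delta_q g c J r a x s t
      = norm (c x) - norm (c x + J x *v s) - t * (g x \<bullet> s) - t * (n2 / (2 * a)) - t * r (x + s) + t * r x"
    by (simp add: delta_q_def n2_def algebra_simps)
  ultimately show ?thesis
    using c_le curvature unfolding n2_def by (simp add: distrib_left)
qed

lemma delta_q_nonneg:
  assumes model: "t * (g x \<bullet> s + \<sigma> * (norm s)\<^sup>2 / a + r (x + s) - r x)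
                    \<le> (1 - \<sigma>\<^sub>c) * (norm (c x) - norm (c x + J x *v s))"
    and "norm (c x + J x *v s) \<le> norm (c x)" "0 \<le> \<sigma>\<^sub>c" "1 / 2 \<le> \<sigma>" "0 \<le> t" "0 < a"
  shows "0 \<le> delta_q g c J r a x s t"
proof -
  define n2 where "n2 = (norm s)\<^sup>2"
  define N where "N = norm (c x) - norm (c x + J x *v s)"
  have "1 / 2 * n2 / a \<le> \<sigma> * n2 / a"
    using assms(4,6) unfolding n2_def by (intro divide_right_mono mult_right_mono) auto
  then have "t * (n2 / (2 * a)) \<le> t * (\<sigma> * n2 / a)"
    using \<open>0 \<le> t\<close> by (intro mult_left_mono) auto
  moreover have "0 \<le> \<sigma>\<^sub>c * N"
    using assms(2,3) unfolding N_def by simp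
  moreover have "delta_q g c J r a x s t = N - t * (g x \<bullet> s + r (x + s) - r x) - t * (n2 / (2 * a))"
    unfolding delta_q_def N_def n2_def by (simp add: algebra_simps)
  moreover have "t * (g x \<bullet> s + \<sigma> * n2 / a + r (x + s) - r x) = t * (g x \<bullet> s + r (x + s) - r x) + t * (\<sigma> * n2 / a)"
    by (simp add: algebra_simps)
  ultimately show ?thesis
    using model unfolding N_def n2_def by (simp add: algebra_simps)
qed

text \<open>Step 3 of the algorithm; the trial value is ignored when \<open>D \<le> 0\<close>, which encodes \<open>tau_trial = \<infinity>\<close>.\<close>

definition merit_param_update :: "real \<Rightarrow> real \<Rightarrow> real \<Rightarrow> real \<Rightarrow> real" where
  "merit_param_update \<epsilon> D trial prev =
     (if D \<le> 0 \<or> prev \<le> trial then prev else min ((1 - \<epsilon>) * prev) trial)"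

lemma merit_param_update_le_trial:
  "0 < D \<Longrightarrow> merit_param_update \<epsilon> D trial prev \<le> trial"
  by (auto simp: merit_param_update_def)

lemma merit_param_update_lower_bound:
  assumes "0 \<le> \<epsilon>" "\<epsilon> \<le> 1" "0 \<le> trial_min" "0 < D \<Longrightarrow> trial_min \<le> trial"
    and "lb \<le> prev" "lb \<le> (1 - \<epsilon>) * trial_min"
  shows "lb \<le> merit_param_update \<epsilon> D trial prev"
proof (cases "D \<le> 0 \<or> prev \<le> trial")
  case False
  then have "trial_min \<le> trial"
    using assms(4) by simp
  then have "(1 - \<epsilon>) * trial_min \<le> (1 - \<epsilon>) * prev" "(1 - \<epsilon>) * trial_min \<le> trial"
    using False assms(1-3) by (auto intro: mult_left_mono order_trans[OF mult_left_le_one_le])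
  then show ?thesis
    using False assms(6) by (simp add: merit_param_update_def)
qed (use assms(5) in \<open>auto simp: merit_param_update_def\<close>)

lemma merit_param_update_pos:
  assumes "0 < prev" "\<epsilon> < 1" "0 < D \<Longrightarrow> 0 < trial"
  shows "0 < merit_param_update \<epsilon> D trial prev"
  using assms by (auto simp: merit_param_update_def)

subsection \<open>Step-size bookkeeping\<close>

lemma step_size_ge:
  fixes alpha :: "nat \<Rightarrow> real"
  assumes "alpha 0 = alpha0" "0 < xi"
    and update: "\<And>k. alpha (Suc k) = (if k \<in> S then alpha k else xi * alpha k)"
    and small: "\<And>k. alpha k \<le> \<theta> \<Longrightarrow> k \<in> S"
  shows "min alpha0 (xi * \<theta>) \<le> alpha k"
proof (induction k)
  case 0
  then show ?case
    using assms(1) by simp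
next
  case (Suc k)
  show ?case
  proof (cases "k \<in> S")
    case True
    then show ?thesis
      using Suc update by simp
  next
    case False
    then have "xi * \<theta> \<le> xi * alpha k"
      using small \<open>0 < xi\<close> by force
    then show ?thesis
      using False update by simp
  qed
qed

lemma step_size_eq_power:
  fixes alpha :: "nat \<Rightarrow> real"
  assumes "alpha 0 = alpha0"
    and update: "\<And>k. alpha (Suc k) = (if k \<in> S then alpha k else xi * alpha k)"
  shows "alpha k = alpha0 * xi ^ card ({..<k} - S)"
proof (induction k)
  case 0
  then show ?case
    using assms(1) by simp
next
  case (Suc k)
  then show ?case
    using update[of k] by (simp add: lessThan_Suc insert_Diff_if)
qed

lemma unsuccessful_finite_card_le:
  fixes alpha :: "nat \<Rightarrow> real"
  assumes "alpha 0 = alpha0" "0 < alpha0" "0 < xi" "xi < 1" "0 < \<theta>"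
    and update: "\<And>k. alpha (Suc k) = (if k \<in> S then alpha k else xi * alpha k)"
    and small: "\<And>k. alpha k \<le> \<theta> \<Longrightarrow> k \<in> S"
  shows "finite {k. k \<notin> S}" "int (card {k. k \<notin> S}) \<le> max 0 \<lceil>ln (\<theta> / alpha0) / ln xi\<rceil>"
proof -
  define F where "F = {k. k \<notin> S}"
  define n where "n k = card ({..<k} - S)" for k
  define N where "N = nat \<lceil>ln (\<theta> / alpha0) / ln xi\<rceil>"
  have n_less: "n k < N" if "k \<in> F" for k
  proof -
    have "\<theta> < alpha k"
      using that small unfolding F_def by force
    then have "\<theta> / alpha0 < xi ^ n k"
      using step_size_eq_power[OF assms(1) update] assms(2) unfolding n_def by (simp add: pos_divide_less_eq mult.commute)
    then have "ln (\<theta> / alpha0) < real (n k) * ln xi"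
      using assms(2,3,5) by (simp add: ln_realpow[symmetric])
    then have "real (n k) < ln (\<theta> / alpha0) / ln xi"
      using assms(3,4) by (simp add: less_divide_eq)
    then show ?thesis
      unfolding N_def by (simp add: zless_nat_eq_int_zless less_ceiling_iff)
  qed
  have "inj_on n F"
  proof (rule linorder_inj_onI')
    fix i j
    assume "i \<in> F" "j \<in> F" "i < j"
    then have "{..<i} - S \<subset> {..<j} - S"
      unfolding F_def by auto
    then have "n i < n j"
      unfolding n_def by (simp add: psubset_card_mono)
    then show "n i \<noteq> n j"
      by simp
  qed
  moreover have "n ` F \<subseteq> {..<N}"
    using n_less by auto
  ultimately have "finite F" "card F \<le> card {..<N}"
    using inj_on_finite card_inj_on_le by blast+
  then show "finite {k. k \<notin> S}" "int (card {k. k \<notin> S}) \<le> max 0 \<lceil>ln (\<theta> / alpha0) / ln xi\<rceil>"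
    unfolding F_def N_def by auto
qed

locale prox_sqp_run =
  fixes f :: "real^'n \<Rightarrow> real" and g :: "real^'n \<Rightarrow> real^'n"
    and c :: "real^'n \<Rightarrow> real^'m" and J :: "real^'n \<Rightarrow> real^'n^'m"
    and r :: "real^'n \<Rightarrow> real"
    and kappa_v sigma_c eps_tau xi eta sigma_u alpha0 tau_m1 :: real
    and x :: "nat \<Rightarrow> real^'n" and alpha tau beta :: "nat \<Rightarrow> real"
    and v u :: "nat \<Rightarrow> real^'n"
    and k_f k_c k_J k_r L_g L_J smin :: real
    and X :: "(real^'n) set"
  assumes f_deriv: "\<And>z. (f has_derivative (\<lambda>h. g z \<bullet> h)) (at z)"
    and c_deriv: "\<And>z. (c has_derivative (\<lambda>h. J z *v h)) (at z)"
    and r_convex: "convex_on UNIV r"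
    and params: "0 < kappa_v" "0 < sigma_c" "sigma_c < 1" "0 < eps_tau" "eps_tau < 1"
      "0 < xi" "xi < 1" "0 < eta" "eta < 1" "0 < sigma_u" "sigma_u \<le> 1/2"
      "0 < alpha0" "0 < tau_m1"
    and run: "alg_iterates f g c J r kappa_v sigma_c eps_tau xi eta sigma_u alpha0 tau_m1
                x alpha tau v u beta"
    and pos_bounds: "0 < k_f" "0 < k_J" "0 < k_r" "0 < L_g" "0 < L_J"
    and X: "open X" "convex X" "\<And>k. x k \<in> X" "\<And>k. x k + (v k + u k) \<in> X"
    and bounds: "\<And>z. z \<in> X \<Longrightarrow> norm (g z) \<le> k_f" "\<And>z. z \<in> X \<Longrightarrow> norm (c z) \<le> k_c"
      "\<And>z. z \<in> X \<Longrightarrow> spec_norm (J z) \<le> k_J"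
      "\<And>z w. z \<in> X \<Longrightarrow> w \<in> subdiff r z \<Longrightarrow> norm w \<le> k_r"
    and lipschitz: "\<And>y z. y \<in> X \<Longrightarrow> z \<in> X \<Longrightarrow> norm (g y - g z) \<le> L_g * dist y z"
      "\<And>y z. y \<in> X \<Longrightarrow> z \<in> X \<Longrightarrow> spec_norm (J y - J z) \<le> L_J * dist y z"
    and smin: "0 < smin" "\<And>k. smin \<le> sigma_min_sv (J (x k))"
begin

definition D :: "nat \<Rightarrow> real" where
  "D k = g (x k) \<bullet> (v k + u k) + (sigma_u + 1/2) * (norm (v k + u k))\<^sup>2 / alpha k
           + r (x k + (v k + u k)) - r (x k)"

definition lin_decrease :: "nat \<Rightarrow> real" where
  "lin_decrease k = norm (c (x k)) - norm (c (x k) + J (x k) *v v k)"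

definition tau_trial :: "nat \<Rightarrow> real" where
  "tau_trial k = (1 - sigma_c) * lin_decrease k / D k"

definition tau_prev :: "nat \<Rightarrow> real" where
  "tau_prev k = (if k = 0 then tau_m1 else tau (k - 1))"

definition K :: real where
  "K = 2 * kappa_v * k_J * (k_f + k_r + (sigma_u + 1/2) * k_c * kappa_v * k_J)"

definition tau_min_trial :: real where
  "tau_min_trial = min ((1 - sigma_c) * kappa_v * smin\<^sup>2 / K) ((1 - sigma_c) * (smin / k_J)\<^sup>2 / (K * alpha0))"

definition tau_min :: real where
  "tau_min = min (tau 0) ((1 - eps_tau) * tau_min_trial)"

lemma alpha_0: "alpha 0 = alpha0"
  using run unfolding alg_iterates_def by blast

lemma alpha_Suc:
  "alpha (Suc k) = (if successful f g c J r eta x alpha tau v u k then alpha k else xi * alpha k)"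
  using run unfolding alg_iterates_def Let_def by auto

lemma v_zero: "transpose (J (x k)) *v c (x k) = 0 \<Longrightarrow> v k = 0"
  using run unfolding alg_iterates_def Let_def by blast

lemma normal_step:
  assumes "transpose (J (x k)) *v c (x k) \<noteq> 0"
  shows "v k \<in> range (\<lambda>y. transpose (J (x k)) *v y)"
    and "norm (v k) \<le> kappa_v * alpha k * norm (transpose (J (x k)) *v c (x k))"
    and "\<And>b. 0 \<le> b \<Longrightarrow> b \<le> kappa_v * alpha k \<Longrightarrow>
       norm (c (x k) - beta k *\<^sub>R (J (x k) *v (transpose (J (x k)) *v c (x k))))
         \<le> norm (c (x k) - b *\<^sub>R (J (x k) *v (transpose (J (x k)) *v c (x k))))"
    and "norm (c (x k) + J (x k) *v v k)
           \<le> norm (c (x k) - beta k *\<^sub>R (J (x k) *v (transpose (J (x k)) *v c (x k))))"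
proof -
  have step1: "v k \<in> range (\<lambda>y. transpose (J (x k)) *v y) \<and>
      norm (v k) \<le> kappa_v * alpha k * norm (transpose (J (x k)) *v c (x k)) \<and>
      (\<forall>b. 0 \<le> b \<and> b \<le> kappa_v * alpha k \<longrightarrow>
         (norm (c (x k) - beta k *\<^sub>R (J (x k) *v (transpose (J (x k)) *v c (x k)))))\<^sup>2 / 2
           \<le> (norm (c (x k) - b *\<^sub>R (J (x k) *v (transpose (J (x k)) *v c (x k)))))\<^sup>2 / 2) \<and>
      norm (c (x k) + J (x k) *v v k)
        \<le> norm (c (x k) + J (x k) *v ((- beta k) *\<^sub>R (transpose (J (x k)) *v c (x k))))"
    using run assms unfolding alg_iterates_def Let_def by blast
  then show "v k \<in> range (\<lambda>y. transpose (J (x k)) *v y)"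
    "norm (v k) \<le> kappa_v * alpha k * norm (transpose (J (x k)) *v c (x k))"
    by blast+
  show "norm (c (x k) + J (x k) *v v k)
           \<le> norm (c (x k) - beta k *\<^sub>R (J (x k) *v (transpose (J (x k)) *v c (x k))))"
    using step1 matrix_vector_mult_scaleR[of "J (x k)" "- beta k"] by simp
  fix b
  assume "0 \<le> b" "b \<le> kappa_v * alpha k"
  then show "norm (c (x k) - beta k *\<^sub>R (J (x k) *v (transpose (J (x k)) *v c (x k))))
         \<le> norm (c (x k) - b *\<^sub>R (J (x k) *v (transpose (J (x k)) *v c (x k))))"
    using step1 by (auto intro: power2_le_imp_le)
qed

lemma u_null: "J (x k) *v u k = 0"
  using run unfolding alg_iterates_def Let_def by blast

lemma u_optimal: "J (x k) *v w = 0 \<Longrightarrow> u_obj g r (alpha k) (x k) (v k) (u k) \<le> u_obj g r (alpha k) (x k) (v k) w"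
  using run unfolding alg_iterates_def Let_def by blast

lemma tau_eq_update: "tau k = merit_param_update eps_tau (D k) (tau_trial k) (tau_prev k)"
proof -
  have "(D k \<le> 0 \<longrightarrow> tau k = tau_prev k) \<and>
        (0 < D k \<longrightarrow> tau k = (if tau_prev k \<le> tau_trial k then tau_prev k
                                 else min ((1 - eps_tau) * tau_prev k) (tau_trial k)))"
    using run unfolding alg_iterates_def Let_def D_def tau_trial_def lin_decrease_def tau_prev_def
    by blast
  then show ?thesis
    unfolding merit_param_update_def by auto
qed

lemma alpha_pos_le: "0 < alpha k \<and> alpha k \<le> alpha0"
proof (induction k)
  case 0
  then show ?case
    using alpha_0 params by simp
next
  case (Suc k)
  have "0 < xi * alpha k" "xi * alpha k \<le> alpha k"
    using Suc params by (simp_all add: mult_left_le_one_le)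
  moreover have "alpha (Suc k) = alpha k \<or> alpha (Suc k) = xi * alpha k"
    using alpha_Suc[of k] by simp
  ultimately show ?case
    using Suc by (intro conjI; elim disjE; linarith)
qed

lemma alpha_pos: "0 < alpha k"
  using alpha_pos_le by blast

lemma alpha_le: "alpha k \<le> alpha0"
  using alpha_pos_le by blast

lemma v_orth_u: "v k \<bullet> u k = 0"
proof (cases "transpose (J (x k)) *v c (x k) = 0")
  case True
  then show ?thesis
    using v_zero by simp
next
  case False
  then obtain y where "v k = transpose (J (x k)) *v y"
    using normal_step(1) by blast
  then show ?thesis
    using u_null[of k] by (simp add: dot_lmul_matrix)
qed

lemma v_norm_le: "norm (v k) \<le> kappa_v * alpha k * (k_J * norm (c (x k)))"
proof (cases "transpose (J (x k)) *v c (x k) = 0")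
  case True
  then show ?thesis
    using v_zero params(1) alpha_pos[of k] pos_bounds(2) by simp
next
  case False
  have "norm (transpose (J (x k)) *v c (x k)) \<le> k_J * norm (c (x k))"
    by (rule norm_transpose_vector_le[OF bounds(3)[OF X(3)]])
  then show ?thesis
    using normal_step(2)[OF False] params(1) alpha_pos[of k]
    by (meson mult_left_mono order_trans less_imp_le mult_pos_pos)
qed

lemma D_le: "D k \<le> (k_f + k_r) * norm (v k) + (sigma_u + 1/2) * (norm (v k))\<^sup>2 / alpha k"
  unfolding D_def
proof (rule tangential_step_bound[OF r_convex X(1) X(4) bounds(4)])
  fix e :: real
  have "J (x k) *v ((1 - e) *\<^sub>R u k) = 0"
    using u_null by (simp add: matrix_vector_mult_scaleR)
  then show "u_obj g r (alpha k) (x k) (v k) (u k) \<le> u_obj g r (alpha k) (x k) (v k) ((1 - e) *\<^sub>R u k)"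
    by (rule u_optimal)
qed (use v_orth_u alpha_pos params bounds(1)[OF X(3)] in auto)

lemma K_pos: "0 < K"
proof -
  have "0 \<le> k_c"
    using bounds(2)[OF X(3), of 0] norm_ge_zero order_trans by blast
  then show ?thesis
    unfolding K_def using params pos_bounds by (intro mult_pos_pos add_pos_nonneg mult_nonneg_nonneg) auto
qed

lemma D_le_K: "D k \<le> K * alpha k * norm (c (x k)) / 2"
proof -
  define a nc sb where "a = alpha k" and "nc = norm (c (x k))" and "sb = sigma_u + 1/2"
  have a: "0 < a"
    using alpha_pos unfolding a_def by blast
  have v: "norm (v k) \<le> kappa_v * a * k_J * nc"
    using v_norm_le unfolding a_def nc_def by (simp add: mult_ac)
  have "nc \<le> k_c"
    unfolding nc_def by (rule bounds(2)[OF X(3)])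
  then have "kappa_v * a * k_J * nc \<le> kappa_v * a * k_J * k_c"
    using params(1) pos_bounds(2) a by (intro mult_left_mono) auto
  then have "norm (v k) \<le> kappa_v * a * k_J * k_c"
    using v by linarith
  with v have "(norm (v k))\<^sup>2 \<le> (kappa_v * a * k_J * nc) * (kappa_v * a * k_J * k_c)"
    unfolding power2_eq_square using params(1) pos_bounds(2) a by (intro mult_mono) (auto simp: nc_def)
  then have "sb * (norm (v k))\<^sup>2 / a \<le> sb * ((kappa_v * a * k_J * nc) * (kappa_v * a * k_J * k_c)) / a"
    using a params by (intro divide_right_mono mult_left_mono) (auto simp: sb_def)
  moreover have "(k_f + k_r) * norm (v k) \<le> (k_f + k_r) * (kappa_v * a * k_J * nc)"
    using v pos_bounds by (intro mult_left_mono) auto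
  moreover have "(k_f + k_r) * (kappa_v * a * k_J * nc) + sb * ((kappa_v * a * k_J * nc) * (kappa_v * a * k_J * k_c)) / a
      = K * a * nc / 2"
    using a unfolding K_def sb_def by (simp add: field_simps)
  ultimately show ?thesis
    using D_le[of k] unfolding a_def nc_def sb_def by linarith
qed

lemma lin_decrease_nonneg: "0 \<le> lin_decrease k"
proof (cases "transpose (J (x k)) *v c (x k) = 0")
  case True
  then show ?thesis
    using v_zero unfolding lin_decrease_def by simp
next
  case False
  have "0 \<le> kappa_v * alpha k"
    using params(1) alpha_pos[of k] by simp
  from cauchy_step_decrease(1)[OF bounds(3)[OF X(3)] pos_bounds(2) this normal_step(3,4)[OF False]]
  show ?thesis
    unfolding lin_decrease_def by simp
qed

lemma lin_decrease_cauchy: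
  "min (kappa_v * alpha k) (1 / k_J\<^sup>2) * (norm (transpose (J (x k)) *v c (x k)))\<^sup>2 / (2 * norm (c (x k)))
     \<le> lin_decrease k"
proof (cases "transpose (J (x k)) *v c (x k) = 0")
  case True
  then show ?thesis
    using lin_decrease_nonneg by simp
next
  case False
  have "0 \<le> kappa_v * alpha k"
    using params(1) alpha_pos[of k] by simp
  from cauchy_step_decrease(2)[OF bounds(3)[OF X(3)] pos_bounds(2) this normal_step(3,4)[OF False]]
  show ?thesis
    unfolding lin_decrease_def by simp
qed

lemma lin_decrease_ge: "smin\<^sup>2 * min (kappa_v * alpha k) (1 / k_J\<^sup>2) * norm (c (x k)) / 2 \<le> lin_decrease k"
proof (cases "c (x k) = 0")
  case True
  then show ?thesis
    using lin_decrease_nonneg by simp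
next
  case False
  define b where "b = min (kappa_v * alpha k) (1 / k_J\<^sup>2)"
  have "0 \<le> b"
    unfolding b_def using params(1) alpha_pos[of k] by simp
  have "(smin * norm (c (x k)))\<^sup>2 \<le> (norm (transpose (J (x k)) *v c (x k)))\<^sup>2"
    using sigma_min_sv_le[OF smin(2)] smin(1) by (intro power_mono) auto
  then have "b * (smin * norm (c (x k)))\<^sup>2 / (2 * norm (c (x k)))
      \<le> b * (norm (transpose (J (x k)) *v c (x k)))\<^sup>2 / (2 * norm (c (x k)))"
    using \<open>0 \<le> b\<close> by (intro divide_right_mono mult_left_mono) auto
  moreover have "b * (smin * norm (c (x k)))\<^sup>2 / (2 * norm (c (x k))) = smin\<^sup>2 * b * norm (c (x k)) / 2"
    using False by (simp add: power2_eq_square)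
  ultimately show ?thesis
    using lin_decrease_cauchy[of k] unfolding b_def by linarith
qed

lemma tau_min_trial_eq: "tau_min_trial = (1 - sigma_c) * smin\<^sup>2 / K * min kappa_v (1 / (k_J\<^sup>2 * alpha0))"
proof -
  have "0 \<le> (1 - sigma_c) * smin\<^sup>2 / K"
    using params K_pos by simp
  then show ?thesis
    unfolding tau_min_trial_def min_mult_distrib_left by (simp add: power_divide mult_ac)
qed

lemma tau_min_trial_pos: "0 < tau_min_trial"
  unfolding tau_min_trial_eq using params pos_bounds smin K_pos by simp

lemma tau_min_trial_le_tau_trial:
  assumes "0 < D k"
  shows "tau_min_trial \<le> tau_trial k"
proof -
  define a nc b where "a = alpha k" and "nc = norm (c (x k))" and "b = min (kappa_v * a) (1 / k_J\<^sup>2)"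
  have a: "0 < a" "a \<le> alpha0"
    using alpha_pos alpha_le unfolding a_def by auto
  have "c (x k) \<noteq> 0"
    using assms D_le[of k] v_zero[of k] by auto
  then have "0 < nc"
    unfolding nc_def by simp
  have "(1 - sigma_c) * (smin\<^sup>2 * b * nc / 2) / (K * a * nc / 2) \<le> (1 - sigma_c) * lin_decrease k / D k"
  proof (rule frac_le)
    show "0 \<le> (1 - sigma_c) * lin_decrease k"
      using params lin_decrease_nonneg by simp
    show "(1 - sigma_c) * (smin\<^sup>2 * b * nc / 2) \<le> (1 - sigma_c) * lin_decrease k"
      using params lin_decrease_ge[of k] unfolding a_def b_def nc_def by (intro mult_left_mono) auto
  qed (use assms D_le_K[of k] in \<open>auto simp: a_def nc_def\<close>)
  moreover have "(1 - sigma_c) * (smin\<^sup>2 * b * nc / 2) / (K * a * nc / 2) = (1 - sigma_c) * smin\<^sup>2 / K * (b / a)"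
    using \<open>0 < nc\<close> a K_pos by (simp add: field_simps)
  moreover have "min kappa_v (1 / (k_J\<^sup>2 * alpha0)) \<le> b / a"
  proof -
    have "b / a = min kappa_v (1 / (k_J\<^sup>2 * a))"
      unfolding b_def using a by (simp add: min_divide_distrib_right)
    moreover have "1 / (k_J\<^sup>2 * alpha0) \<le> 1 / (k_J\<^sup>2 * a)"
      using a pos_bounds by (intro divide_left_mono mult_left_mono mult_pos_pos) auto
    ultimately show ?thesis
      by auto
  qed
  then have "tau_min_trial \<le> (1 - sigma_c) * smin\<^sup>2 / K * (b / a)"
    unfolding tau_min_trial_eq using params K_pos by (intro mult_left_mono) auto
  ultimately show ?thesis
    unfolding tau_trial_def by simp
qed

lemma tau_ge_tau_min: "tau_min \<le> tau k"
proof (induction k)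
  case 0
  then show ?case
    unfolding tau_min_def by simp
next
  case (Suc k)
  show ?case
    unfolding tau_eq_update[of "Suc k"]
  proof (rule merit_param_update_lower_bound[where trial_min = tau_min_trial])
    show "tau_min \<le> tau_prev (Suc k)"
      using Suc unfolding tau_prev_def by simp
  qed (use params tau_min_trial_pos tau_min_trial_le_tau_trial in \<open>auto simp: tau_min_def\<close>)
qed

lemma tau_min_pos: "0 < tau_min"
proof -
  have "0 < tau 0"
    unfolding tau_eq_update[of 0]
    by (rule merit_param_update_pos)
      (use params tau_min_trial_pos tau_min_trial_le_tau_trial[of 0] in \<open>auto simp: tau_prev_def\<close>)
  then show ?thesis
    unfolding tau_min_def using params tau_min_trial_pos by simp
qed

lemma tau_mult_D_le: "tau k * D k \<le> (1 - sigma_c) * lin_decrease k"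
proof (cases "0 < D k")
  case True
  then have "tau k * D k \<le> tau_trial k * D k"
    unfolding tau_eq_update[of k] by (intro mult_right_mono merit_param_update_le_trial) auto
  then show ?thesis
    unfolding tau_trial_def using True by simp
next
  case False
  then have "tau k * D k \<le> 0"
    using tau_ge_tau_min[of k] tau_min_pos by (simp add: mult_nonneg_nonpos)
  moreover have "0 \<le> (1 - sigma_c) * lin_decrease k"
    using params lin_decrease_nonneg[of k] by simp
  ultimately show ?thesis
    by linarith
qed

lemma successful_if_small_step:
  assumes step: "alpha k * (tau k * L_g + L_J) \<le> tau k"
  shows "successful f g c J r eta x alpha tau v u k"
proof -
  have "0 < tau k" "0 < alpha k"
    using tau_ge_tau_min[of k] tau_min_pos alpha_pos[of k] by auto
  have Js: "J (x k) *v (v k + u k) = J (x k) *v v k"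
    using u_null[of k] by (simp add: matrix_vector_right_distrib)
  have "f (x k + (v k + u k)) \<le> f (x k) + g (x k) \<bullet> (v k + u k) + L_g / 2 * (norm (v k + u k))\<^sup>2"
    by (rule lipschitz_gradient_upper_bound[OF f_deriv X(2,3,4)]) (rule lipschitz(1))
  moreover have "norm (c (x k + (v k + u k)))
      \<le> norm (c (x k) + J (x k) *v (v k + u k)) + L_J / 2 * (norm (v k + u k))\<^sup>2"
    by (rule lipschitz_jacobian_linearization_bound[OF c_deriv X(2,3,4)]) (rule lipschitz(2))
  ultimately have decrease: "merit f r c (tau k) (x k + (v k + u k))
      \<le> merit f r c (tau k) (x k) - delta_q g c J r (alpha k) (x k) (v k + u k) (tau k)"
    using step \<open>0 < tau k\<close> \<open>0 < alpha k\<close> by (intro merit_le_sub_delta_q) auto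
  have "0 \<le> delta_q g c J r (alpha k) (x k) (v k + u k) (tau k)"
  proof (rule delta_q_nonneg[where \<sigma> = "sigma_u + 1/2" and \<sigma>\<^sub>c = sigma_c])
    show "tau k * (g (x k) \<bullet> (v k + u k) + (sigma_u + 1/2) * (norm (v k + u k))\<^sup>2 / alpha k
          + r (x k + (v k + u k)) - r (x k))
        \<le> (1 - sigma_c) * (norm (c (x k)) - norm (c (x k) + J (x k) *v (v k + u k)))"
      using tau_mult_D_le[of k] unfolding D_def lin_decrease_def Js .
    show "norm (c (x k) + J (x k) *v (v k + u k)) \<le> norm (c (x k))"
      using lin_decrease_nonneg[of k] unfolding lin_decrease_def Js by simp
  qed (use params \<open>0 < tau k\<close> \<open>0 < alpha k\<close> in auto)
  then have "eta * delta_q g c J r (alpha k) (x k) (v k + u k) (tau k)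
      \<le> delta_q g c J r (alpha k) (x k) (v k + u k) (tau k)"
    using params by (simp add: mult_left_le_one_le)
  then show ?thesis
    using decrease unfolding successful_def by simp
qed

lemma successful_if_alpha_le:
  assumes "alpha k \<le> tau_min / (tau_min * L_g + L_J)"
  shows "successful f g c J r eta x alpha tau v u k"
proof (rule successful_if_small_step)
  have tau: "tau_min \<le> tau k" "0 < tau_min"
    using tau_ge_tau_min tau_min_pos by auto
  then have "tau_min * (tau k * L_g + L_J) \<le> tau k * (tau_min * L_g + L_J)"
    using pos_bounds by (simp add: algebra_simps mult_right_mono)
  then have "tau_min / (tau_min * L_g + L_J) \<le> tau k / (tau k * L_g + L_J)"
    using tau pos_bounds by (simp add: divide_simps add_pos_pos mult.commute)
  with assms have "alpha k \<le> tau k / (tau k * L_g + L_J)"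
    by linarith
  then show "alpha k * (tau k * L_g + L_J) \<le> tau k"
    using tau pos_bounds by (simp add: pos_le_divide_eq add_pos_pos)
qed

end

theorem lemma3p14:
  fixes f :: "real^'n \<Rightarrow> real" and g :: "real^'n \<Rightarrow> real^'n"
    and c :: "real^'n \<Rightarrow> real^'m" and J :: "real^'n \<Rightarrow> real^'n^'m"
    and r :: "real^'n \<Rightarrow> real"
    and kappa_v sigma_c eps_tau xi eta sigma_u alpha0 tau_m1 :: real
    and x :: "nat \<Rightarrow> real^'n" and alpha tau beta :: "nat \<Rightarrow> real"
    and v u :: "nat \<Rightarrow> real^'n"
    and k_f k_c k_J k_r L_g L_J smin :: real
  assumes dims: "CARD('m) \<le> CARD('n)"
    and f_C1: "\<forall>z. (f has_derivative (\<lambda>h. g z \<bullet> h)) (at z)" "continuous_on UNIV g"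
    and c_C1: "\<forall>z. (c has_derivative (\<lambda>h. J z *v h)) (at z)" "continuous_on UNIV J"
    and r_convex: "convex_on UNIV r" and r_nonneg: "\<forall>z. 0 \<le> r z"
    and params: "0 < kappa_v" "0 < sigma_c" "sigma_c < 1" "0 < eps_tau" "eps_tau < 1"
      "0 < xi" "xi < 1" "0 < eta" "eta < 1" "0 < sigma_u" "sigma_u \<le> 1/2"
      "0 < alpha0" "0 < tau_m1"
    and run: "alg_iterates f g c J r kappa_v sigma_c eps_tau xi eta sigma_u alpha0 tau_m1
                x alpha tau v u beta"
    and no_term: "\<forall>k. (transpose (J (x k)) *v c (x k) = 0 \<longrightarrow> c (x k) = 0) \<and> v k + u k \<noteq> 0"
    and pos_bounds: "0 < k_f" "0 < k_c" "0 < k_J" "0 < k_r" "0 < L_g" "0 < L_J"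
    and standing: "\<exists>X. open X \<and> convex X \<and>
        (\<forall>k. x k \<in> X \<and> x k + (v k + u k) \<in> X) \<and>
        bdd_below (f ` X) \<and>
        (\<forall>z\<in>X. norm (g z) \<le> k_f \<and> norm (c z) \<le> k_c \<and> spec_norm (J z) \<le> k_J \<and>
                 (\<forall>w\<in>subdiff r z. norm w \<le> k_r)) \<and>
        (\<forall>y\<in>X. \<forall>z\<in>X. norm (g y - g z) \<le> L_g * dist y z \<and>
                          spec_norm (J y - J z) \<le> L_J * dist y z)"
    and smin: "0 < smin" "\<forall>k. smin \<le> sigma_min_sv (J (x k))"
  defines "K \<equiv> 2 * kappa_v * k_J * (k_f + k_r + (sigma_u + 1/2) * k_c * kappa_v * k_J)"
  defines "tau_min_trial \<equiv> min ((1 - sigma_c) * kappa_v * smin\<^sup>2 / K)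
                              ((1 - sigma_c) * (smin / k_J)\<^sup>2 / (K * alpha0))"
  defines "tau_min \<equiv> min (tau 0) ((1 - eps_tau) * tau_min_trial)"
  defines "S \<equiv> {k. successful f g c J r eta x alpha tau v u k}"
  defines "alpha_min \<equiv> min alpha0 (xi * tau_min / (tau_min * L_g + L_J))"
  shows "(\<forall>k. alpha k \<le> tau_min / (tau_min * L_g + L_J) \<longrightarrow> k \<in> S) \<and>
         (\<forall>k. alpha_min \<le> alpha k) \<and> 0 < alpha_min \<and>
         finite {k. k \<notin> S} \<and>
         int (card {k. k \<notin> S})
           \<le> max 0 \<lceil>ln (tau_min / (alpha0 * (tau_min * L_g + L_J))) / ln xi\<rceil>"
proof -
  obtain X where X: "open X" "convex X" "\<forall>k. x k \<in> X \<and> x k + (v k + u k) \<in> X"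
    and bounds: "\<forall>z\<in>X. norm (g z) \<le> k_f \<and> norm (c z) \<le> k_c \<and> spec_norm (J z) \<le> k_J \<and>
                 (\<forall>w\<in>subdiff r z. norm w \<le> k_r)"
    and lipschitz: "\<forall>y\<in>X. \<forall>z\<in>X. norm (g y - g z) \<le> L_g * dist y z \<and> spec_norm (J y - J z) \<le> L_J * dist y z"
    using standing by blast
  interpret R: prox_sqp_run f g c J r kappa_v sigma_c eps_tau xi eta sigma_u alpha0 tau_m1 x alpha tau beta v u
      k_f k_c k_J k_r L_g L_J smin X
    using f_C1(1) c_C1(1) r_convex params run pos_bounds X bounds lipschitz smin by unfold_locales auto
  have tau_min: "R.tau_min = tau_min"
    unfolding R.tau_min_def R.tau_min_trial_def R.K_def tau_min_def tau_min_trial_def K_def ..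
  define \<theta> where "\<theta> = tau_min / (tau_min * L_g + L_J)"
  have "0 < \<theta>"
    unfolding \<theta>_def using R.tau_min_pos pos_bounds tau_min by (intro divide_pos_pos add_pos_pos mult_pos_pos) auto
  have small: "alpha k \<le> \<theta> \<Longrightarrow> k \<in> S" for k
    using R.successful_if_alpha_le tau_min unfolding S_def \<theta>_def by simp
  have update: "alpha (Suc k) = (if k \<in> S then alpha k else xi * alpha k)" for k
    using R.alpha_Suc unfolding S_def by simp
  have alpha_min: "alpha_min = min alpha0 (xi * \<theta>)"
    unfolding alpha_min_def \<theta>_def by simp
  have ratio: "\<theta> / alpha0 = tau_min / (alpha0 * (tau_min * L_g + L_J))"
    unfolding \<theta>_def by (simp add: mult.commute)
  show ?thesis
    using small step_size_ge[OF R.alpha_0 params(6) update small] \<open>0 < \<theta>\<close> params(6,12)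
      unsuccessful_finite_card_le[OF R.alpha_0 params(12,6,7) \<open>0 < \<theta>\<close> update small]
    unfolding alpha_min ratio[symmetric] \<theta>_def[symmetric] by auto
qed

end
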